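(* Consider a shared-cache coded caching system with $N$ files $X^1,\dots,X^N$, $K$ users and $\Lambda\le K$ caches, with $N\ge K$, and let $t=\Lambda\gamma\in\{1,\dots,\Lambda\}$ be an integer. The users are partitioned into sets $\mathcal{U}_1,\dots,\mathcal{U}_\Lambda$, where $\mathcal{U}_\lambda$ is the set of users associated with cache $\lambda$, and the caches are labelled so that $\mathcal{L}_1\ge\mathcal{L}_2\ge\dots\ge\mathcal{L}_\Lambda$, where $\mathcal{L}_\lambda=|\mathcal{U}_\lambda|$. Let the placement be the SC placement $\mathcal{M}_{\text{SC}}$ described in the context, and let $\mathbf{d}_{\text{worst}}=(d_1,\dots,d_K)$ be a demand vector in which the users request pairwise distinct files. Then the generalized independence number and the min-rank over $\mathbb{F}_q$ of the induced index coding problem $\mathcal{I}(\mathcal{M}_{\text{SC}},\mathbf{d}_{\text{worst}})$ satisfy $$\alpha(\mathcal{M}_{\text{SC}},\mathbf{d}_{\text{worst}})=\kappa(\mathcal{M}_{\text{SC}},\mathbf{d}_{\text{worst}})=\sum_{i=1}^{\Lambda-\Lambda\gamma}\mathcal{L}_i\binom{\Lambda-i}{\Lambda\gamma}.$$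
   Context: Binomial convention: $\binom{n}{k}=\frac{n!}{(n-k)!k!}$ and $\binom{n}{k}=0$ if $n<k$. Here $\gamma=M/N$, where $M$ is the normalized cache memory, and $t=\Lambda\gamma$ is assumed to be an integer. SC placement $\mathcal{M}_{\text{SC}}$: each file $X^n$ is split into $\binom{\Lambda}{t}$ disjoint subfiles $X^n_{\mathcal{T}}$, one for each $\mathcal{T}\subseteq[\Lambda]$ with $|\mathcal{T}|=t$, and each subfile is regarded as a single symbol of the finite field $\mathbb{F}_q$. Cache $\lambda$ stores all subfiles $X^n_{\mathcal{T}}$ with $\lambda\in\mathcal{T}$, $n\in[N]$. Every user associated with cache $\lambda$ has access to exactly that cache's content. Index coding problem $\mathcal{I}(\mathcal{M}_{\text{SC}},\mathbf{d})$: its messages are the $N\binom{\Lambda}{t}$ subfiles $X^n_{\mathcal{T}}$. For each user $u$, associated with cache $\lambda$ and demanding file $d_u$, and for each $\mathcal{T}$ with $\lambda\notin\mathcal{T}$, there is one receiver that demands $X^{d_u}_{\mathcal{T}}$ and whose side-information set is the set of messages stored in cache $\lambda$. For an index coding problem with messages indexed by $[n]$ and receivers $i\in[K']$, where receiver $i$ demands message $f(i)$ and has side-information index set $\mathcal{X}_i$ with $f(i)\notin\mathcal{X}_i$, define the following. - Min-rank over $\mathbb{F}_q$: $\kappa=\min\{\mathrm{rank}_q(\{\mathbf{v}_i+\mathbf{e}_{f(i)}\}_{i\in[K']}) : \mathbf{v}_i\in\mathbb{F}_q^n,\ \mathrm{supp}(\mathbf{v}_i)\subseteq\mathcal{X}_i\}$,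 where $\mathbf{e}_j$ is the $j$-th standard unit vector. This equals the minimum length of a scalar linear index code over $\mathbb{F}_q$. - Generalized independence number: let $\mathcal{Y}_i=[n]\setminus(\{f(i)\}\cup\mathcal{X}_i)$ and $\mathcal{J}=\bigcup_{i}\{\{f(i)\}\cup Y_i : Y_i\subseteq\mathcal{Y}_i\}$. A set $H\subseteq[n]$ is a generalized independent set if every nonempty subset of $H$ belongs to $\mathcal{J}$. Then $\alpha$ is the maximum size of a generalized independent set. $\alpha(\mathcal{M}_{\text{SC}},\mathbf{d})$ and $\kappa(\mathcal{M}_{\text{SC}},\mathbf{d})$ denote these quantities for $\mathcal{I}(\mathcal{M}_{\text{SC}},\mathbf{d})$. *)

theory Defs
  imports Complex_Main "HOL-Library.Function_Algebras"
begin

text \<open>Generic index coding problem: message index set M, receiver set R,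
  demanded message f i, side-information set X i.  Vectors over the field 'a
  are functions from message indices to 'a (zero outside M by the support
  constraint); rank is the dimension of the span w.r.t. pointwise scaling.\<close>

definition unit_vec :: "'m \<Rightarrow> 'm \<Rightarrow> 'a::field" where
  "unit_vec j = (\<lambda>m. if m = j then 1 else 0)"

definition vec_rank :: "('m \<Rightarrow> 'a::field) set \<Rightarrow> nat" where
  "vec_rank S = vector_space.dim (\<lambda>(c::'a) (w::'m \<Rightarrow> 'a) x. c * w x) S"

definition min_rank :: "'a::field itself \<Rightarrow> 'm set \<Rightarrow> 'r set \<Rightarrow> ('r \<Rightarrow> 'm) \<Rightarrow> ('r \<Rightarrow> 'm set) \<Rightarrow> nat" where
  "min_rank _ M R f X =
     Min { vec_rank ((\<lambda>i. v i + (unit_vec (f i) :: 'm \<Rightarrow> 'a)) ` R)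
         | v :: 'r \<Rightarrow> 'm \<Rightarrow> 'a. \<forall>i\<in>R. {m. v i m \<noteq> 0} \<subseteq> X i }"

definition gen_indep_family :: "'m set \<Rightarrow> 'r set \<Rightarrow> ('r \<Rightarrow> 'm) \<Rightarrow> ('r \<Rightarrow> 'm set) \<Rightarrow> 'm set set" where
  "gen_indep_family M R f X =
     (\<Union>i\<in>R. {insert (f i) Y | Y. Y \<subseteq> M - (insert (f i) (X i))})"

definition gen_indep_set :: "'m set \<Rightarrow> 'r set \<Rightarrow> ('r \<Rightarrow> 'm) \<Rightarrow> ('r \<Rightarrow> 'm set) \<Rightarrow> 'm set \<Rightarrow> bool" where
  "gen_indep_set M R f X H \<longleftrightarrow> H \<subseteq> M \<and>
     (\<forall>B. B \<subseteq> H \<and> B \<noteq> {} \<longrightarrow> B \<in> gen_indep_family M R f X)"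

definition gen_indep_num :: "'m set \<Rightarrow> 'r set \<Rightarrow> ('r \<Rightarrow> 'm) \<Rightarrow> ('r \<Rightarrow> 'm set) \<Rightarrow> nat" where
  "gen_indep_num M R f X = Max {card H | H. gen_indep_set M R f X H}"

text \<open>SC placement (files 1..N, caches 1..Lam, users 1..K, c u = cache of user u).
  Message (n, T) is subfile X^n_T.  Receiver (u, T) with c u \<notin> T demands X^{d u}_T.\<close>

definition sc_messages :: "nat \<Rightarrow> nat \<Rightarrow> nat \<Rightarrow> (nat \<times> nat set) set" where
  "sc_messages N Lam t = {(n, T). n \<in> {1..N} \<and> T \<subseteq> {1..Lam} \<and> card T = t}"

definition sc_receivers :: "nat \<Rightarrow> nat \<Rightarrow> nat \<Rightarrow> (nat \<Rightarrow> nat) \<Rightarrow> (nat \<times> nat set) set" where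
  "sc_receivers K Lam t c = {(u, T). u \<in> {1..K} \<and> T \<subseteq> {1..Lam} \<and> card T = t \<and> c u \<notin> T}"

definition sc_demand :: "(nat \<Rightarrow> nat) \<Rightarrow> nat \<times> nat set \<Rightarrow> nat \<times> nat set" where
  "sc_demand d r = (d (fst r), snd r)"

definition sc_side :: "nat \<Rightarrow> nat \<Rightarrow> nat \<Rightarrow> (nat \<Rightarrow> nat) \<Rightarrow> nat \<times> nat set \<Rightarrow> (nat \<times> nat set) set" where
  "sc_side N Lam t c r = {m \<in> sc_messages N Lam t. c (fst r) \<in> snd m}"

definition users_of :: "nat \<Rightarrow> (nat \<Rightarrow> nat) \<Rightarrow> nat \<Rightarrow> nat set" where
  "users_of K c lam = {u \<in> {1..K}. c u = lam}"

end

theory Submission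
  imports Defs
begin

text \<open>Both quantities are squeezed between the same number.  For any index coding problem,
  a generalized independent set H yields card H linearly independent rows of every admissible
  encoding matrix, so the generalized independence number is at most the min-rank.  For the SC
  placement, the subfiles X^{d u}_T demanded by receivers (u, T) whose set T lies strictly
  above the cache of u form a generalized independent set (the receiver with the lowest cache
  knows none of the others).  Conversely, the shared-cache scheme sends, for each rank j and
  each (t+1)-set Q of caches, the sum of the subfiles X^{d u}_{Q - {c u}} over the j-th users
  u of the caches in Q; every receiver decodes from one such transmission, and every
  transmission actually used is also the one decoded by a receiver of that upper kind (the
  j-th user of cache Min Q, which exists since the caches are sorted by decreasing size).
  Counting these receivers gives the sum of binomial coefficients.\<close>

subsection \<open>Ranks of sets of functions into a field\<close>

interpretation fun_vs: vector_space "\<lambda>(c::'a::field) (w::'m \<Rightarrow> 'a) x. c * w x"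
  by unfold_locales (auto simp: fun_eq_iff algebra_simps)

lemma vec_rank_eq_dim: "vec_rank S = fun_vs.dim S"
  unfolding vec_rank_def by simp

lemma vec_rank_le_card:
  fixes S :: "('m \<Rightarrow> 'a::field) set"
  assumes "finite S"
  shows "vec_rank S \<le> card S"
  unfolding vec_rank_eq_dim using fun_vs.dim_le_card[OF fun_vs.span_superset assms] .

lemma card_independent_le_vec_rank:
  fixes S V :: "('m \<Rightarrow> 'a::field) set"
  assumes "finite V" "S \<subseteq> V" "fun_vs.independent S"
  shows "card S \<le> vec_rank V"
proof -
  obtain B where B: "B \<subseteq> V" "fun_vs.independent B" "V \<subseteq> fun_vs.span B" "card B = fun_vs.dim V"
    by (rule fun_vs.basis_exists)
  have "finite B" using B(1) assms(1) finite_subset by blast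
  moreover have "S \<subseteq> fun_vs.span B" using assms(2) B(3) by blast
  ultimately have "card S \<le> card B" using fun_vs.independent_span_bound assms(3) by blast
  then show ?thesis using B(4) by (simp add: vec_rank_eq_dim)
qed

lemma supp_sum_unit_vec:
  "{m. (\<Sum>i\<in>A. unit_vec (p i) :: 'm \<Rightarrow> 'a::field) m \<noteq> 0} \<subseteq> p ` A"
proof
  fix m assume "m \<in> {m. (\<Sum>i\<in>A. unit_vec (p i) :: 'm \<Rightarrow> 'a) m \<noteq> 0}"
  moreover have "(\<Sum>i\<in>A. unit_vec (p i) :: 'm \<Rightarrow> 'a) m = (\<Sum>i\<in>A. unit_vec (p i) m)"
    by (induction A rule: infinite_finite_induct) auto
  ultimately have "(\<Sum>i\<in>A. (unit_vec (p i) :: 'm \<Rightarrow> 'a) m) \<noteq> 0" by simp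
  then obtain i where "i \<in> A" "(unit_vec (p i) :: 'm \<Rightarrow> 'a) m \<noteq> 0" by (meson sum.neutral)
  then show "m \<in> p ` A" by (auto simp: unit_vec_def split: if_splits)
qed

subsection \<open>Min-rank and generalized independence number\<close>

lemma finite_min_rank_candidates:
  fixes f :: "'r \<Rightarrow> 'm"
  assumes "finite R"
  shows "finite { vec_rank ((\<lambda>i. v i + (unit_vec (f i) :: 'm \<Rightarrow> 'a::field)) ` R)
         | v :: 'r \<Rightarrow> 'm \<Rightarrow> 'a. \<forall>i\<in>R. {m. v i m \<noteq> 0} \<subseteq> X i }" (is "finite ?V")
proof (rule finite_subset)
  show "?V \<subseteq> {..card R}"
  proof
    fix x assume "x \<in> ?V"
    then obtain v :: "'r \<Rightarrow> 'm \<Rightarrow> 'a"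
      where x: "x = vec_rank ((\<lambda>i. v i + unit_vec (f i)) ` R)" by blast
    have "x \<le> card ((\<lambda>i. v i + (unit_vec (f i) :: 'm \<Rightarrow> 'a)) ` R)"
      unfolding x using vec_rank_le_card assms by blast
    also have "\<dots> \<le> card R" using card_image_le assms by blast
    finally show "x \<in> {..card R}" by simp
  qed
qed simp

lemma min_rank_le:
  fixes q :: "'a::field itself" and f :: "'r \<Rightarrow> 'm" and v :: "'r \<Rightarrow> 'm \<Rightarrow> 'a"
  assumes "finite R" "\<forall>i\<in>R. {m. v i m \<noteq> 0} \<subseteq> X i"
  shows "min_rank q M R f X \<le> vec_rank ((\<lambda>i. v i + unit_vec (f i)) ` R)"
  unfolding min_rank_def
  by (rule Min_le[OF finite_min_rank_candidates[OF assms(1)]]) (use assms(2) in blast)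

lemma min_rank_attained:
  fixes q :: "'a::field itself" and f :: "'r \<Rightarrow> 'm"
  assumes "finite R"
  obtains v :: "'r \<Rightarrow> 'm \<Rightarrow> 'a" where "\<forall>i\<in>R. {m. v i m \<noteq> 0} \<subseteq> X i"
    and "min_rank q M R f X = vec_rank ((\<lambda>i. v i + unit_vec (f i)) ` R)"
proof -
  let ?V = "{ vec_rank ((\<lambda>i. v i + (unit_vec (f i) :: 'm \<Rightarrow> 'a)) ` R)
         | v :: 'r \<Rightarrow> 'm \<Rightarrow> 'a. \<forall>i\<in>R. {m. v i m \<noteq> 0} \<subseteq> X i }"
  have "vec_rank ((\<lambda>i. (\<lambda>_ _. 0) i + (unit_vec (f i) :: 'm \<Rightarrow> 'a)) ` R) \<in> ?V" by force
  then have "Min ?V \<in> ?V" using Min_in[OF finite_min_rank_candidates[OF assms]] by blast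
  then show ?thesis using that unfolding min_rank_def by blast
qed

lemma finite_gen_indep_cards:
  assumes "finite M"
  shows "finite {card H | H. gen_indep_set M R f X H}"
proof (rule finite_subset)
  show "{card H | H. gen_indep_set M R f X H} \<subseteq> card ` Pow M"
    unfolding gen_indep_set_def by blast
qed (use assms in simp)

lemma card_le_gen_indep_num:
  assumes "finite M" "gen_indep_set M R f X H"
  shows "card H \<le> gen_indep_num M R f X"
  unfolding gen_indep_num_def using assms by (intro Max_ge finite_gen_indep_cards) auto

lemma gen_indep_num_attained:
  assumes "finite M"
  obtains H where "gen_indep_set M R f X H" "gen_indep_num M R f X = card H"
proof -
  have "gen_indep_set M R f X {}" unfolding gen_indep_set_def by blast
  then have "{card H | H. gen_indep_set M R f X H} \<noteq> {}" by blast
  then have "gen_indep_num M R f X \<in> {card H | H. gen_indep_set M R f X H}"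
    unfolding gen_indep_num_def by (rule Max_in[OF finite_gen_indep_cards[OF assms]])
  then show ?thesis using that by blast
qed

lemma vanishing_span_insert:
  fixes a :: "'m \<Rightarrow> 'a::field"
  assumes a1: "a x = 1" and a0: "\<forall>h\<in>Y. a h = 0"
    and S: "\<forall>w\<in>fun_vs.span S. (\<forall>h\<in>Y. w h = 0) \<longrightarrow> w = 0"
  shows "a \<notin> fun_vs.span S"
    and "\<forall>w\<in>fun_vs.span (insert a S). (\<forall>h\<in>insert x Y. w h = 0) \<longrightarrow> w = 0"
proof -
  show "a \<notin> fun_vs.span S"
  proof
    assume "a \<in> fun_vs.span S"
    then have "a = 0" using S a0 by blast
    then show False using a1 by simp
  qed
  show "\<forall>w\<in>fun_vs.span (insert a S). (\<forall>h\<in>insert x Y. w h = 0) \<longrightarrow> w = 0"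
  proof (intro ballI impI)
    fix w assume "w \<in> fun_vs.span (insert a S)" and wz: "\<forall>h\<in>insert x Y. w h = 0"
    then obtain k where k: "w - (\<lambda>z. k * a z) \<in> fun_vs.span S"
      using fun_vs.span_breakdown_eq[of w a S] by auto
    have "\<forall>h\<in>Y. (w - (\<lambda>z. k * a z)) h = 0" using wz a0 by auto
    then have e: "w - (\<lambda>z. k * a z) = 0" using k S by blast
    then have "w x - k * a x = 0" by (metis fun_diff_def zero_fun_def)
    with wz a1 have "k = 0" by simp
    with e show "w = 0" by (simp add: fun_eq_iff)
  qed
qed

text \<open>The receiver certifying H' = insert (f i) Y contributes a row with a 1 at f i and zeros
  on Y; the invariant is that the only vector in the span of the chosen rows vanishing on H' is 0.\<close>

lemma gen_indep_set_independent_rows: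
  fixes v :: "'r \<Rightarrow> 'm \<Rightarrow> 'a::field"
  assumes fX: "\<forall>i\<in>R. f i \<notin> X i"
    and supp: "\<forall>i\<in>R. {m. v i m \<noteq> 0} \<subseteq> X i"
    and H: "gen_indep_set M R f X H"
    and "finite H'" "H' \<subseteq> H"
  shows "\<exists>S \<subseteq> (\<lambda>i. v i + unit_vec (f i)) ` R. finite S \<and> card S = card H' \<and>
           fun_vs.independent S \<and> (\<forall>w\<in>fun_vs.span S. (\<forall>h\<in>H'. w h = 0) \<longrightarrow> w = 0)"
  using assms(4,5)
proof (induction "card H'" arbitrary: H')
  case 0
  then show ?case by (intro exI[of _ "{}"]) (auto simp: fun_vs.independent_empty)
next
  case (Suc n)
  then have "H' \<noteq> {}" by auto
  then have "H' \<in> gen_indep_family M R f X"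
    using H Suc.prems(2) unfolding gen_indep_set_def by blast
  then obtain i Y where iR: "i \<in> R" and HY: "H' = insert (f i) Y"
    and Y: "Y \<subseteq> M - insert (f i) (X i)"
    unfolding gen_indep_family_def by blast
  have "f i \<notin> Y" using Y by blast
  then have "card Y = n" "finite Y" "Y \<subseteq> H"
    using Suc.hyps(2) Suc.prems HY by auto
  then obtain S where S: "S \<subseteq> (\<lambda>i. v i + unit_vec (f i)) ` R" "finite S" "card S = n"
      "fun_vs.independent S" and Sz: "\<forall>w\<in>fun_vs.span S. (\<forall>h\<in>Y. w h = 0) \<longrightarrow> w = 0"
    using Suc.hyps(1)[of Y] by blast
  define a where "a = v i + unit_vec (f i)"
  have "a (f i) = 1" using fX supp iR unfolding a_def unit_vec_def by auto
  moreover have "\<forall>h\<in>Y. a h = 0" using Y supp iR unfolding a_def unit_vec_def by auto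
  ultimately have a_notin: "a \<notin> fun_vs.span S"
    and "\<forall>w\<in>fun_vs.span (insert a S). (\<forall>h\<in>H'. w h = 0) \<longrightarrow> w = 0"
    using vanishing_span_insert[OF _ _ Sz] unfolding HY by blast+
  moreover have "a \<notin> S" using a_notin fun_vs.span_base by blast
  ultimately show ?case
    using S fun_vs.independent_insertI[OF a_notin S(4)] Suc.hyps(2) iR
    by (intro exI[of _ "insert a S"]) (auto simp: a_def)
qed

theorem gen_indep_num_le_min_rank:
  fixes q :: "'a::field itself" and f :: "'r \<Rightarrow> 'm"
  assumes "finite M" "finite R" and fX: "\<forall>i\<in>R. f i \<notin> X i"
  shows "gen_indep_num M R f X \<le> min_rank q M R f X"
proof -
  obtain v :: "'r \<Rightarrow> 'm \<Rightarrow> 'a" where adm: "\<forall>i\<in>R. {m. v i m \<noteq> 0} \<subseteq> X i"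
    and kappa: "min_rank q M R f X = vec_rank ((\<lambda>i. v i + unit_vec (f i)) ` R)"
    using min_rank_attained[OF assms(2)] by blast
  obtain H where H: "gen_indep_set M R f X H" and alpha: "gen_indep_num M R f X = card H"
    using gen_indep_num_attained[OF assms(1)] by blast
  have "finite H" using H assms(1) finite_subset unfolding gen_indep_set_def by blast
  then obtain S where S: "S \<subseteq> (\<lambda>i. v i + unit_vec (f i)) ` R" "card S = card H"
      "fun_vs.independent S"
    using gen_indep_set_independent_rows[OF fX adm H] by blast
  show ?thesis
    unfolding alpha kappa S(2)[symmetric]
    by (rule card_independent_le_vec_rank[OF finite_imageI[OF assms(2)] S(1,3)])
qed

subsection \<open>Counting the upper receivers\<close>

definition upper_receivers :: "nat \<Rightarrow> nat \<Rightarrow> nat \<Rightarrow> (nat \<Rightarrow> nat) \<Rightarrow> (nat \<times> nat set) set" where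
  "upper_receivers K Lam t c = {(u, T). u \<in> {1..K} \<and> T \<subseteq> {c u<..Lam} \<and> card T = t}"

lemma finite_users_of: "finite (users_of K c l)"
  unfolding users_of_def by simp

lemma finite_sc_messages: "finite (sc_messages N Lam t)"
  by (rule finite_subset[of _ "{1..N} \<times> Pow {1..Lam}"]) (auto simp: sc_messages_def)

lemma finite_sc_receivers: "finite (sc_receivers K Lam t c)"
  by (rule finite_subset[of _ "{1..K} \<times> Pow {1..Lam}"]) (auto simp: sc_receivers_def)

lemma finite_upper_receivers: "finite (upper_receivers K Lam t c)"
  by (rule finite_subset[of _ "{1..K} \<times> Pow {0..Lam}"]) (auto simp: upper_receivers_def)

lemma card_upper_receivers:
  assumes cr: "\<forall>u\<in>{1..K}. c u \<in> {1..Lam}" and "1 \<le> t"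
  shows "card (upper_receivers K Lam t c)
       = (\<Sum>i = 1..Lam - t. card (users_of K c i) * ((Lam - i) choose t))"
proof -
  have "upper_receivers K Lam t c
      = (\<Union>l\<in>{1..Lam}. users_of K c l \<times> {T. T \<subseteq> {l<..Lam} \<and> card T = t})"
    unfolding upper_receivers_def users_of_def using cr by auto
  then have "card (upper_receivers K Lam t c)
      = (\<Sum>l\<in>{1..Lam}. card (users_of K c l \<times> {T. T \<subseteq> {l<..Lam} \<and> card T = t}))"
    by (simp only:) (rule card_UN_disjoint, auto simp: finite_users_of users_of_def)
  also have "\<dots> = (\<Sum>l\<in>{1..Lam}. card (users_of K c l) * ((Lam - l) choose t))"
    by (simp add: card_cartesian_product n_subsets)
  also have "\<dots> = (\<Sum>i = 1..Lam - t. card (users_of K c i) * ((Lam - i) choose t))"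
    by (rule sum.mono_neutral_right) (use \<open>1 \<le> t\<close> in auto)
  finally show ?thesis .
qed

subsection \<open>A generalized independent set\<close>

lemma sc_demand_notin_sc_side: "\<forall>r\<in>sc_receivers K Lam t c. sc_demand d r \<notin> sc_side N Lam t c r"
  unfolding sc_receivers_def sc_demand_def sc_side_def by auto

text \<open>For a nonempty B, the receiver (u, T) behind B with the lowest cache c u is the witness:
  c u lies in none of the other sets T', which are all above c u.\<close>

lemma gen_indep_set_upper_demands:
  assumes dr: "\<forall>u\<in>{1..K}. d u \<in> {1..N}"
  shows "gen_indep_set (sc_messages N Lam t) (sc_receivers K Lam t c) (sc_demand d)
           (sc_side N Lam t c) (sc_demand d ` upper_receivers K Lam t c)"
  unfolding gen_indep_set_def
proof (intro conjI allI impI)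
  show sub: "sc_demand d ` upper_receivers K Lam t c \<subseteq> sc_messages N Lam t"
    using dr by (auto simp: upper_receivers_def sc_messages_def sc_demand_def)
  fix B assume B: "B \<subseteq> sc_demand d ` upper_receivers K Lam t c \<and> B \<noteq> {}"
  define B0 where "B0 = {r \<in> upper_receivers K Lam t c. sc_demand d r \<in> B}"
  obtain r1 where "r1 \<in> B0" using B unfolding B0_def by blast
  then obtain u T where uT0: "(u, T) \<in> B0" and lowest: "\<forall>r\<in>B0. c u \<le> c (fst r)"
    using ex_has_least_nat[of "\<lambda>r. r \<in> B0" r1 "\<lambda>r. c (fst r)"] by (metis prod.collapse)
  have uT: "u \<in> {1..K}" "T \<subseteq> {c u<..Lam}" "card T = t" and dB: "sc_demand d (u, T) \<in> B"
    using uT0 unfolding B0_def upper_receivers_def by auto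
  have iR: "(u, T) \<in> sc_receivers K Lam t c"
    using uT unfolding sc_receivers_def by auto
  have "B - {sc_demand d (u, T)}
      \<subseteq> sc_messages N Lam t - insert (sc_demand d (u, T)) (sc_side N Lam t c (u, T))"
  proof
    fix y assume y: "y \<in> B - {sc_demand d (u, T)}"
    then obtain r' where r': "r' \<in> B0" "y = sc_demand d r'"
      using B unfolding B0_def by blast
    obtain u' T' where r'_eq: "r' = (u', T')" by (cases r')
    have "c u \<le> c u'" using lowest r'(1) unfolding r'_eq by (metis fst_conv)
    moreover have "T' \<subseteq> {c u'<..Lam}" using r'(1) unfolding r'_eq B0_def upper_receivers_def by simp
    ultimately have "c u \<notin> T'" by auto
    moreover have "y \<in> sc_messages N Lam t" using y B sub by blast
    ultimately show "y \<in> sc_messages N Lam t - insert (sc_demand d (u, T)) (sc_side N Lam t c (u, T))"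
      using y unfolding r'(2) r'_eq sc_side_def sc_demand_def by auto
  qed
  moreover have "B = insert (sc_demand d (u, T)) (B - {sc_demand d (u, T)})" using dB by auto
  ultimately show "B \<in> gen_indep_family (sc_messages N Lam t) (sc_receivers K Lam t c)
      (sc_demand d) (sc_side N Lam t c)"
    unfolding gen_indep_family_def by (intro UN_I[OF iR]) blast
qed

lemma card_upper_receivers_le_gen_indep_num:
  assumes "\<forall>u\<in>{1..K}. d u \<in> {1..N}" and dinj: "inj_on d {1..K}"
  shows "card (upper_receivers K Lam t c)
       \<le> gen_indep_num (sc_messages N Lam t) (sc_receivers K Lam t c) (sc_demand d) (sc_side N Lam t c)"
proof -
  have "inj_on (sc_demand d) (upper_receivers K Lam t c)"
  proof (rule inj_onI)
    fix r r' assume "r \<in> upper_receivers K Lam t c" "r' \<in> upper_receivers K Lam t c"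
      and eq: "sc_demand d r = sc_demand d r'"
    then have "fst r \<in> {1..K}" "fst r' \<in> {1..K}"
      unfolding upper_receivers_def by (simp_all add: case_prod_beta)
    moreover have "d (fst r) = d (fst r')" "snd r = snd r'"
      using eq unfolding sc_demand_def by simp_all
    ultimately have "fst r = fst r'" "snd r = snd r'" using inj_onD[OF dinj] by blast+
    then show "r = r'" by (simp add: prod_eq_iff)
  qed
  then have "card (upper_receivers K Lam t c) = card (sc_demand d ` upper_receivers K Lam t c)"
    by (simp add: card_image)
  also have "\<dots> \<le> gen_indep_num (sc_messages N Lam t) (sc_receivers K Lam t c) (sc_demand d)
      (sc_side N Lam t c)"
    by (rule card_le_gen_indep_num[OF finite_sc_messages gen_indep_set_upper_demands[OF assms(1)]])
  finally show ?thesis .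
qed

subsection \<open>The shared-cache scheme\<close>

definition cache_user :: "nat \<Rightarrow> (nat \<Rightarrow> nat) \<Rightarrow> nat \<Rightarrow> nat \<Rightarrow> nat" where
  "cache_user K c l = (SOME h. bij_betw h {0..<card (users_of K c l)} (users_of K c l))"

definition user_rank :: "nat \<Rightarrow> (nat \<Rightarrow> nat) \<Rightarrow> nat \<Rightarrow> nat" where
  "user_rank K c u = inv_into {0..<card (users_of K c (c u))} (cache_user K c (c u)) u"

lemma bij_betw_cache_user:
  "bij_betw (cache_user K c l) {0..<card (users_of K c l)} (users_of K c l)"
  unfolding cache_user_def by (rule someI_ex[OF ex_bij_betw_nat_finite[OF finite_users_of]])

lemma user_rank_less_and_cache_user_user_rank:
  assumes "u \<in> {1..K}"
  shows "user_rank K c u < card (users_of K c (c u)) \<and> cache_user K c (c u) (user_rank K c u) = u"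
proof -
  have "u \<in> users_of K c (c u)" using assms unfolding users_of_def by simp
  then have u: "u \<in> cache_user K c (c u) ` {0..<card (users_of K c (c u))}"
    using bij_betw_imp_surj_on[OF bij_betw_cache_user] by simp
  show ?thesis unfolding user_rank_def using inv_into_into[OF u] f_inv_into_f[OF u] by simp
qed

lemma cache_user_in_users_of_and_user_rank:
  assumes "j < card (users_of K c l)"
  shows "cache_user K c l j \<in> users_of K c l \<and> user_rank K c (cache_user K c l j) = j"
proof -
  have j: "j \<in> {0..<card (users_of K c l)}" using assms by simp
  have mem: "cache_user K c l j \<in> users_of K c l" using bij_betwE[OF bij_betw_cache_user] j by blast
  then have "c (cache_user K c l j) = l" unfolding users_of_def by simp
  then have "user_rank K c (cache_user K c l j)
      = inv_into {0..<card (users_of K c l)} (cache_user K c l) (cache_user K c l j)"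
    unfolding user_rank_def by simp
  also have "\<dots> = j" using inv_into_f_f[OF bij_betw_imp_inj_on[OF bij_betw_cache_user] j] .
  finally show ?thesis using mem by simp
qed

text \<open>The transmission indexed by a rank j and a (t+1)-set Q of caches, which the receiver
  (u, T) decodes when j is the rank of u and Q = insert (c u) T.\<close>

definition sc_transmission :: "nat \<Rightarrow> (nat \<Rightarrow> nat) \<Rightarrow> (nat \<Rightarrow> nat) \<Rightarrow> nat \<Rightarrow> nat set
    \<Rightarrow> nat \<times> nat set \<Rightarrow> 'a::field" where
  "sc_transmission K c d j Q =
     (\<Sum>l\<in>{l\<in>Q. j < card (users_of K c l)}. unit_vec (d (cache_user K c l j), Q - {l}))"

definition sc_transmission_index :: "nat \<Rightarrow> (nat \<Rightarrow> nat) \<Rightarrow> nat \<times> nat set \<Rightarrow> nat \<times> nat set" where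
  "sc_transmission_index K c r = (user_rank K c (fst r), insert (c (fst r)) (snd r))"

definition sc_interference :: "nat \<Rightarrow> (nat \<Rightarrow> nat) \<Rightarrow> (nat \<Rightarrow> nat) \<Rightarrow> nat \<times> nat set
    \<Rightarrow> nat \<times> nat set \<Rightarrow> 'a::field" where
  "sc_interference K c d r =
     (\<Sum>l\<in>{l\<in>snd r. user_rank K c (fst r) < card (users_of K c l)}.
        unit_vec (d (cache_user K c l (user_rank K c (fst r))), insert (c (fst r)) (snd r) - {l}))"

lemma sc_receiverD:
  "(u, T) \<in> sc_receivers K Lam t c \<Longrightarrow>
     u \<in> {1..K} \<and> T \<subseteq> {1..Lam} \<and> card T = t \<and> c u \<notin> T \<and> finite T"
  unfolding sc_receivers_def by (auto intro: finite_subset)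

lemma sc_interference_plus_demand:
  assumes "r \<in> sc_receivers K Lam t c"
  shows "(sc_interference K c d r :: _ \<Rightarrow> 'a::field) + unit_vec (sc_demand d r)
       = (case sc_transmission_index K c r of (j, Q) \<Rightarrow> sc_transmission K c d j Q)"
proof -
  obtain u T where r: "r = (u, T)" by (cases r)
  have R: "u \<in> {1..K}" "c u \<notin> T" "finite T" using sc_receiverD assms r by auto
  define j where "j = user_rank K c u"
  have j: "j < card (users_of K c (c u))" "cache_user K c (c u) j = u"
    using user_rank_less_and_cache_user_user_rank[OF R(1), where c = c] unfolding j_def by auto
  have "{l\<in>insert (c u) T. j < card (users_of K c l)}
      = insert (c u) {l\<in>T. j < card (users_of K c l)}" using j(1) by auto
  moreover have "insert (c u) T - {c u} = T" using R(2) by simp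
  ultimately have "(sc_transmission K c d j (insert (c u) T) :: _ \<Rightarrow> 'a)
      = unit_vec (d u, T) + sc_interference K c d (u, T)"
    unfolding sc_transmission_def sc_interference_def fst_conv snd_conv j_def[symmetric]
    using j(2) R(2,3) by (simp add: sum.insert)
  then show ?thesis
    unfolding r sc_transmission_index_def sc_demand_def j_def by (simp add: add.commute)
qed

lemma supp_sc_interference:
  assumes cr: "\<forall>u\<in>{1..K}. c u \<in> {1..Lam}" and dr: "\<forall>u\<in>{1..K}. d u \<in> {1..N}"
    and r: "r \<in> sc_receivers K Lam t c"
  shows "{m. (sc_interference K c d r :: _ \<Rightarrow> 'a::field) m \<noteq> 0} \<subseteq> sc_side N Lam t c r"
proof -
  obtain u T where rr: "r = (u, T)" by (cases r)
  have R: "u \<in> {1..K}" "T \<subseteq> {1..Lam}" "card T = t" "c u \<notin> T" "finite T"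
    using sc_receiverD r rr by auto
  define j where "j = user_rank K c u"
  have "{m. (sc_interference K c d r :: _ \<Rightarrow> 'a) m \<noteq> 0}
      \<subseteq> (\<lambda>l. (d (cache_user K c l j), insert (c u) T - {l})) ` {l\<in>T. j < card (users_of K c l)}"
    unfolding sc_interference_def rr fst_conv snd_conv j_def by (rule supp_sum_unit_vec)
  also have "\<dots> \<subseteq> sc_side N Lam t c r"
  proof (rule image_subsetI)
    fix l assume l: "l \<in> {l\<in>T. j < card (users_of K c l)}"
    then have "cache_user K c l j \<in> {1..K}"
      using cache_user_in_users_of_and_user_rank[of j K c l] unfolding users_of_def by simp
    then have "d (cache_user K c l j) \<in> {1..N}" using dr by blast
    moreover have "insert (c u) T - {l} \<subseteq> {1..Lam}" using R(1,2) cr by auto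
    moreover have "card (insert (c u) T - {l}) = t" using l R(3,4,5) by simp
    moreover have "l \<noteq> c u" using l R(4) by auto
    ultimately show "(d (cache_user K c l j), insert (c u) T - {l}) \<in> sc_side N Lam t c r"
      unfolding sc_side_def sc_messages_def rr by simp
  qed
  finally show ?thesis .
qed

lemma sc_transmission_index_receivers_subset:
  assumes cr: "\<forall>u\<in>{1..K}. c u \<in> {1..Lam}"
    and mono: "\<forall>i j. 1 \<le> i \<and> i \<le> j \<and> j \<le> Lam \<longrightarrow> card (users_of K c j) \<le> card (users_of K c i)"
  shows "sc_transmission_index K c ` sc_receivers K Lam t c
       \<subseteq> sc_transmission_index K c ` upper_receivers K Lam t c"
proof
  fix p assume "p \<in> sc_transmission_index K c ` sc_receivers K Lam t c"
  then obtain u T where r: "(u, T) \<in> sc_receivers K Lam t c"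
    and p: "p = sc_transmission_index K c (u, T)" by auto
  have R: "u \<in> {1..K}" "T \<subseteq> {1..Lam}" "card T = t" "c u \<notin> T" "finite T"
    using sc_receiverD r by auto
  define Q where "Q = insert (c u) T"
  define l0 where "l0 = Min Q"
  have "finite Q" "Q \<noteq> {}" unfolding Q_def using R(5) by auto
  then have l0: "l0 \<in> Q" "\<forall>x\<in>Q. l0 \<le> x" unfolding l0_def by simp_all
  have Q: "Q \<subseteq> {1..Lam}" "card Q = Suc t" unfolding Q_def using R cr by auto
  have "card (users_of K c (c u)) \<le> card (users_of K c l0)"
    using mono l0 Q(1) R(1) cr unfolding Q_def by auto
  then have j: "user_rank K c u < card (users_of K c l0)"
    using user_rank_less_and_cache_user_user_rank[OF R(1), where c = c] by simp
  define u0 where "u0 = cache_user K c l0 (user_rank K c u)"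
  have u0: "u0 \<in> {1..K}" "c u0 = l0" "user_rank K c u0 = user_rank K c u"
    using cache_user_in_users_of_and_user_rank[OF j] unfolding u0_def users_of_def by auto
  have "(u0, Q - {l0}) \<in> upper_receivers K Lam t c"
    using u0 l0 Q \<open>finite Q\<close> unfolding upper_receivers_def by fastforce
  moreover have "sc_transmission_index K c (u0, Q - {l0}) = p"
    unfolding p sc_transmission_index_def using u0 l0(1) Q_def by auto
  ultimately show "p \<in> sc_transmission_index K c ` upper_receivers K Lam t c" by force
qed

lemma sc_min_rank_le_card_upper_receivers:
  fixes q :: "'a::field itself"
  assumes cr: "\<forall>u\<in>{1..K}. c u \<in> {1..Lam}"
    and mono: "\<forall>i j. 1 \<le> i \<and> i \<le> j \<and> j \<le> Lam \<longrightarrow> card (users_of K c j) \<le> card (users_of K c i)"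
    and dr: "\<forall>u\<in>{1..K}. d u \<in> {1..N}"
  shows "min_rank q (sc_messages N Lam t) (sc_receivers K Lam t c) (sc_demand d) (sc_side N Lam t c)
       \<le> card (upper_receivers K Lam t c)"
proof -
  let ?R = "sc_receivers K Lam t c" and ?g = "sc_transmission_index K c"
  let ?rows = "(\<lambda>r. sc_interference K c d r + (unit_vec (sc_demand d r) :: _ \<Rightarrow> 'a)) ` ?R"
  have rows: "?rows = (\<lambda>(j, Q). sc_transmission K c d j Q) ` ?g ` ?R"
    unfolding image_image using sc_interference_plus_demand by (rule image_cong[OF refl])
  have "min_rank q (sc_messages N Lam t) ?R (sc_demand d) (sc_side N Lam t c) \<le> vec_rank ?rows"
    by (rule min_rank_le[OF finite_sc_receivers]) (use supp_sc_interference[OF cr dr] in blast)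
  also have "\<dots> \<le> card ?rows" by (rule vec_rank_le_card) (simp add: finite_sc_receivers)
  also have "\<dots> \<le> card (?g ` ?R)" unfolding rows by (rule card_image_le) (simp add: finite_sc_receivers)
  also have "\<dots> \<le> card (?g ` upper_receivers K Lam t c)"
    by (rule card_mono[OF _ sc_transmission_index_receivers_subset[OF cr mono]])
      (simp add: finite_upper_receivers)
  also have "\<dots> \<le> card (upper_receivers K Lam t c)" by (rule card_image_le[OF finite_upper_receivers])
  finally show ?thesis .
qed

theorem theorem1:
  fixes N K Lam t :: nat and c d :: "nat \<Rightarrow> nat" and q :: "'a::{field,finite} itself"
  assumes "Lam \<le> K" and "K \<le> N"
    and "1 \<le> t" and "t \<le> Lam"
    and "\<forall>u\<in>{1..K}. c u \<in> {1..Lam}"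
    and "\<forall>i j. 1 \<le> i \<and> i \<le> j \<and> j \<le> Lam \<longrightarrow> card (users_of K c j) \<le> card (users_of K c i)"
    and "\<forall>u\<in>{1..K}. d u \<in> {1..N}" and "inj_on d {1..K}"
  shows "gen_indep_num (sc_messages N Lam t) (sc_receivers K Lam t c) (sc_demand d) (sc_side N Lam t c)
           = min_rank q (sc_messages N Lam t) (sc_receivers K Lam t c) (sc_demand d) (sc_side N Lam t c)
       \<and> min_rank q (sc_messages N Lam t) (sc_receivers K Lam t c) (sc_demand d) (sc_side N Lam t c)
           = (\<Sum>i = 1..Lam - t. card (users_of K c i) * ((Lam - i) choose t))"
proof -
  have "gen_indep_num (sc_messages N Lam t) (sc_receivers K Lam t c) (sc_demand d) (sc_side N Lam t c)
     \<le> min_rank q (sc_messages N Lam t) (sc_receivers K Lam t c) (sc_demand d) (sc_side N Lam t c)"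
    by (rule gen_indep_num_le_min_rank[OF finite_sc_messages finite_sc_receivers
          sc_demand_notin_sc_side])
  moreover have "min_rank q (sc_messages N Lam t) (sc_receivers K Lam t c) (sc_demand d)
      (sc_side N Lam t c) \<le> card (upper_receivers K Lam t c)"
    by (rule sc_min_rank_le_card_upper_receivers[OF assms(5,6,7)])
  moreover have "card (upper_receivers K Lam t c)
      \<le> gen_indep_num (sc_messages N Lam t) (sc_receivers K Lam t c) (sc_demand d) (sc_side N Lam t c)"
    by (rule card_upper_receivers_le_gen_indep_num[OF assms(7,8)])
  ultimately show ?thesis using card_upper_receivers[OF assms(5,3)] by linarith
qed

end
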